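(* The measure space \((\mathbb{R}^{\mathbb{N}},\mu)\) is not semi-finite.
   Context: Let $\mathcal{B}$ be the Borel $\sigma$-algebra of $\mathbb{R}$, $\lambda$ the Lebesgue measure, and $\mathcal{B}_{\infty}$ the $\sigma$-algebra on $\mathbb{R}^{\mathbb{N}}$ generated by the cylinder sets $\prod_{i=1}^{m}C_{i}\times\prod_{i=m+1}^{\infty}\mathbb{R}$ with $C_i\in\mathcal{B}$, $m\in\mathbb{N}$. Let $\mathcal{F}(\mathcal{B},\lambda)$ be the set of finite rectangles $\prod_{i\in\mathbb{N}}C_{i}$ with $C_i\in\mathcal{B}$ and $\prod_{i}\lambda(C_i)\in[0,\infty)$, with $\mathrm{vol}(\prod_{i}C_i):=\prod_i\lambda(C_i)$. The measure $\mu$ is the restriction to $\mathcal{B}_{\infty}$ of the outer measure $\mu^{\ast}(A):=\inf\{\sum_{n}\mathrm{vol}(\mathscr{C}_{n}) : \mathscr{C}_{n}\in\mathcal{F}(\mathcal{B},\lambda),\ A\subset\bigcup_{n}\mathscr{C}_{n}\}$ ($\inf\varnothing=\infty$). *)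

theory Defs
  imports "HOL-Analysis.Analysis"
begin

text \<open>Points of R^N are sequences nat => real (coordinates indexed from 0).\<close>

definition cylinder_sets :: "(nat \<Rightarrow> real) set set" where
  "cylinder_sets = {{x. \<forall>i<m. x i \<in> C i} | (m::nat) (C::nat \<Rightarrow> real set).
                      \<forall>i<m. C i \<in> sets borel}"

definition B_inf :: "(nat \<Rightarrow> real) set set" where
  "B_inf = sigma_sets UNIV cylinder_sets"

definition rect :: "(nat \<Rightarrow> real set) \<Rightarrow> (nat \<Rightarrow> real) set" where
  "rect C = {x. \<forall>i. x i \<in> C i}"

text \<open>The infinite product prod_i lambda(C_i), as the limit of the partial products
  (in [0,infinity], with 0 * infinity = 0).\<close>
definition has_vol :: "(nat \<Rightarrow> real set) \<Rightarrow> ennreal \<Rightarrow> bool" where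
  "has_vol C v \<longleftrightarrow> (\<lambda>n. \<Prod>i<n. emeasure lborel (C i)) \<longlonglongrightarrow> v"

definition finite_rect :: "(nat \<Rightarrow> real set) \<Rightarrow> bool" where
  "finite_rect C \<longleftrightarrow> (\<forall>i. C i \<in> sets borel) \<and> (\<exists>v. has_vol C v \<and> v < \<infinity>)"

definition vol :: "(nat \<Rightarrow> real set) \<Rightarrow> ennreal" where
  "vol C = lim (\<lambda>n. \<Prod>i<n. emeasure lborel (C i))"

definition mu_star :: "(nat \<Rightarrow> real) set \<Rightarrow> ennreal" where
  "mu_star A = Inf {(\<Sum>n. vol (\<C> n)) | \<C>. (\<forall>n. finite_rect (\<C> n)) \<and> A \<subseteq> (\<Union>n. rect (\<C> n))}"

text \<open>mu is the restriction of mu_star to B_inf.\<close>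
definition mu :: "(nat \<Rightarrow> real) set \<Rightarrow> ennreal" where
  "mu A = mu_star A"

definition semifinite :: "'a set set \<Rightarrow> ('a set \<Rightarrow> ennreal) \<Rightarrow> bool" where
  "semifinite S m \<longleftrightarrow> (\<forall>A\<in>S. m A = \<infinity> \<longrightarrow> (\<exists>B\<in>S. B \<subseteq> A \<and> 0 < m B \<and> m B < \<infinity>))"

end

theory Submission
  imports Defs
begin

(* Let A be the rectangle whose sides are [0,1/2] at even and [0,4] at odd coordinates.
   If a finite rectangle D has positive volume, its side measures tend to 1, so infinitely
   often the side of D \<inter> A has at most 2/3 of the measure of the side of D; hence D \<inter> A has
   volume 0, and every subset of A of finite outer measure is null.
   On the other hand, a finite rectangle whose sides meet those of A in non-null sets must miss
   a non-null part of infinitely many sides of A, for otherwise its partial volumes would double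
   every two coordinates. Reserving for each rectangle of a countable family its own such
   coordinate, one builds a point of A outside the whole family; so A has no countable cover
   by finite rectangles, and mu A = \<infinity>. *)

lemma prod_tendsto_nonzero_imp_tendsto_one:
  fixes d :: "nat \<Rightarrow> 'a::real_normed_field"
  assumes lim: "(\<lambda>n. \<Prod>i<n. d i) \<longlonglongrightarrow> v" and "v \<noteq> 0"
  shows "d \<longlonglongrightarrow> 1"
proof -
  have "(\<lambda>n. (\<Prod>i<Suc n. d i) / (\<Prod>i<n. d i)) \<longlonglongrightarrow> v / v"
    using lim LIMSEQ_Suc[OF lim] \<open>v \<noteq> 0\<close> by (intro tendsto_divide)
  moreover have "eventually (\<lambda>n. (\<Prod>i<n. d i) \<noteq> 0) sequentially"
    using lim \<open>v \<noteq> 0\<close> by (rule tendsto_imp_eventually_ne)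
  then have "eventually (\<lambda>n. (\<Prod>i<Suc n. d i) / (\<Prod>i<n. d i) = d n) sequentially"
    by eventually_elim simp
  ultimately show ?thesis
    using \<open>v \<noteq> 0\<close> by (simp add: tendsto_cong)
qed

lemma enn2real_prod: "enn2real (\<Prod>i\<in>A. f i) = (\<Prod>i\<in>A. enn2real (f i))"
  by (induction A rule: infinite_finite_induct) (auto simp: enn2real_mult)

lemma ennreal_prod_tendsto_imp_eventually_factor_gt:
  fixes d :: "nat \<Rightarrow> ennreal"
  assumes lim: "(\<lambda>n. \<Prod>i<n. d i) \<longlonglongrightarrow> v" and "v \<noteq> 0" "v < \<infinity>" and "0 \<le> t" "t < 1"
  shows "eventually (\<lambda>i. ennreal t < d i) sequentially"
proof -
  have "(\<lambda>n. enn2real (\<Prod>i<n. d i)) \<longlonglongrightarrow> enn2real v"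
    using lim \<open>v < \<infinity>\<close> by (intro tendsto_enn2real) auto
  then have "(\<lambda>n. \<Prod>i<n. enn2real (d i)) \<longlonglongrightarrow> enn2real v"
    by (simp add: enn2real_prod)
  moreover have "enn2real v \<noteq> 0"
    using \<open>v \<noteq> 0\<close> \<open>v < \<infinity>\<close> by (simp add: enn2real_eq_0_iff)
  ultimately have "(\<lambda>i. enn2real (d i)) \<longlonglongrightarrow> 1"
    by (rule prod_tendsto_nonzero_imp_tendsto_one)
  then have "eventually (\<lambda>i. t < enn2real (d i)) sequentially"
    using \<open>t < 1\<close> by (rule order_tendstoD)
  then show ?thesis
  proof eventually_elim
    case (elim i)
    then show ?case
      using \<open>0 \<le> t\<close> by (cases "d i") (auto simp: ennreal_less_iff)
  qed
qed

lemma card_Int_lessThan_tendsto_top: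
  assumes "infinite G"
  shows "filterlim (\<lambda>n. card (G \<inter> {..<n})) at_top sequentially"
  unfolding filterlim_at_top
proof
  fix M
  obtain F where F: "finite F" "card F = M" "F \<subseteq> G"
    using infinite_arbitrarily_large[OF assms] by blast
  then obtain N where "F \<subseteq> {..<N}"
    using finite_nat_bounded by blast
  then have "M \<le> card (G \<inter> {..<n})" if "N \<le> n" for n
    using F that by (intro card_mono[of _ F, simplified F]) auto
  then show "eventually (\<lambda>n. M \<le> card (G \<inter> {..<n})) sequentially"
    unfolding eventually_sequentially by blast
qed

lemma ennreal_prod_le_power_card_mult_prod:
  fixes d e :: "nat \<Rightarrow> ennreal"
  assumes "\<And>i. e i \<le> d i" and "\<And>i. i \<in> G \<Longrightarrow> e i \<le> q * d i"
  shows "(\<Prod>i<n. e i) \<le> q ^ card (G \<inter> {..<n}) * (\<Prod>i<n. d i)"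
proof (induction n)
  case 0
  then show ?case by simp
next
  case (Suc n)
  let ?m = "card (G \<inter> {..<n})"
  show ?case
  proof (cases "n \<in> G")
    case True
    then have "G \<inter> {..<Suc n} = insert n (G \<inter> {..<n})" by auto
    then have "card (G \<inter> {..<Suc n}) = Suc ?m" by simp
    moreover have "(\<Prod>i<Suc n. e i) \<le> (q ^ ?m * (\<Prod>i<n. d i)) * (q * d n)"
      using Suc.IH assms(2)[OF True] by (simp add: mult_mono)
    ultimately show ?thesis by (simp add: ac_simps)
  next
    case False
    then have "G \<inter> {..<Suc n} = G \<inter> {..<n}" by (auto simp: less_Suc_eq)
    moreover have "(\<Prod>i<Suc n. e i) \<le> (q ^ ?m * (\<Prod>i<n. d i)) * d n"
      using Suc.IH assms(1) by (simp add: mult_mono)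
    ultimately show ?thesis by (simp add: ac_simps)
  qed
qed

lemma ennreal_prod_tendsto_zero_if_infinitely_often_le:
  fixes d e :: "nat \<Rightarrow> ennreal"
  assumes lim: "(\<lambda>n. \<Prod>i<n. d i) \<longlonglongrightarrow> v" and "v < \<infinity>" and le: "\<And>i. e i \<le> d i"
    and "0 \<le> c" "c < 1" and small: "infinite {i. e i \<le> ennreal c}"
  shows "(\<lambda>n. \<Prod>i<n. e i) \<longlonglongrightarrow> 0"
proof (cases "v = 0")
  case True
  show ?thesis
    by (rule tendsto_sandwich[of "\<lambda>_. 0" _ _ "\<lambda>n. \<Prod>i<n. d i"])
      (use lim True le in \<open>auto intro!: always_eventually prod_mono_ennreal\<close>)
next
  case False
  \<comment> \<open>Eventually \<open>t < d i\<close>; from then on \<open>e i \<le> c\<close> gives \<open>e i \<le> q * d i\<close> with \<open>q < 1\<close>.\<close>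
  define t where "t = (1 + c) / 2"
  define q where "q = c / t"
  have t: "0 < t" "t < 1" and q: "0 \<le> q" "q < 1"
    using \<open>0 \<le> c\<close> \<open>c < 1\<close> by (auto simp: t_def q_def)
  obtain N where N: "\<And>i. N \<le> i \<Longrightarrow> ennreal t < d i"
    using ennreal_prod_tendsto_imp_eventually_factor_gt[OF lim False \<open>v < \<infinity>\<close>, of t] t
    by (auto simp: eventually_sequentially)
  define G where "G = {i. e i \<le> ennreal c} - {..<N}"
  have "infinite G"
    unfolding G_def using small by (rule Diff_infinite_finite[rotated]) simp
  have small_in_G: "e i \<le> ennreal q * d i" if "i \<in> G" for i
  proof -
    have "e i \<le> ennreal q * ennreal t"
      using that t q by (simp add: G_def q_def ennreal_mult[symmetric])
    also have "\<dots> \<le> ennreal q * d i"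
      using N[of i] that by (intro mult_left_mono) (auto simp: G_def)
    finally show ?thesis .
  qed
  have bound: "(\<Prod>i<n. e i) \<le> ennreal q ^ card (G \<inter> {..<n}) * (\<Prod>i<n. d i)" for n
    using le small_in_G by (rule ennreal_prod_le_power_card_mult_prod)
  have "(\<lambda>n. q ^ card (G \<inter> {..<n})) \<longlonglongrightarrow> 0"
    by (rule filterlim_compose[OF LIMSEQ_power_zero card_Int_lessThan_tendsto_top[OF \<open>infinite G\<close>]])
      (use q in simp)
  then have "(\<lambda>n. ennreal (q ^ card (G \<inter> {..<n}))) \<longlonglongrightarrow> ennreal 0"
    by (rule tendsto_ennrealI)
  then have "(\<lambda>n. ennreal q ^ card (G \<inter> {..<n})) \<longlonglongrightarrow> 0"
    using q by (simp add: ennreal_power)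
  then have limit: "(\<lambda>n. ennreal q ^ card (G \<inter> {..<n}) * (\<Prod>i<n. d i)) \<longlonglongrightarrow> 0"
    using tendsto_mult_ennreal[OF _ lim] \<open>v < \<infinity>\<close> by fastforce
  show ?thesis
  proof (rule tendsto_sandwich[OF _ _ tendsto_const])
    show "eventually (\<lambda>n. (\<Prod>i<n. e i) \<le> ennreal q ^ card (G \<inter> {..<n}) * (\<Prod>i<n. d i)) sequentially"
      using bound by (rule always_eventually[OF allI])
  qed (use limit in auto)
qed

lemma ennreal_prod_tendsto_top_if_pairs_ge:
  fixes d :: "nat \<Rightarrow> ennreal"
  assumes lim: "(\<lambda>n. \<Prod>i<n. d i) \<longlonglongrightarrow> v" and nz: "\<And>i. d i \<noteq> 0"
    and pairs: "\<And>i. N \<le> i \<Longrightarrow> ennreal c \<le> d i * d (Suc i)" and "1 < c"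
  shows "v = \<infinity>"
proof (rule ccontr)
  assume "v \<noteq> \<infinity>"
  define P where "P n = (\<Prod>i<n. d i)" for n
  have grow: "ennreal (c ^ j) * P N \<le> P (N + 2 * j)" for j
  proof (induction j)
    case (Suc j)
    have "ennreal (c ^ Suc j) * P N = ennreal c * (ennreal (c ^ j) * P N)"
      using \<open>1 < c\<close> by (simp add: ennreal_mult mult.assoc)
    also have "\<dots> \<le> (d (N + 2 * j) * d (Suc (N + 2 * j))) * P (N + 2 * j)"
      using pairs[of "N + 2 * j"] Suc.IH by (intro mult_mono) auto
    also have "\<dots> = P (N + 2 * Suc j)"
      by (simp add: P_def ac_simps)
    finally show ?case .
  qed simp
  have "(\<lambda>j. P (N + 2 * j)) \<longlonglongrightarrow> v"
    using LIMSEQ_subseq_LIMSEQ[OF lim[folded P_def], of "\<lambda>j. N + 2 * j"]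
    by (simp add: strict_mono_def o_def)
  then have bound: "ennreal (c ^ j) * P N \<le> v" for j
  proof (rule LIMSEQ_le_const, intro exI allI impI)
    fix n assume "j \<le> n"
    then have "ennreal (c ^ j) * P N \<le> ennreal (c ^ n) * P N"
      using \<open>1 < c\<close> by (intro mult_right_mono ennreal_leI power_increasing) auto
    also have "\<dots> \<le> P (N + 2 * n)"
      by (rule grow)
    finally show "ennreal (c ^ j) * P N \<le> P (N + 2 * n)" .
  qed
  obtain r where r: "v = ennreal r" "0 \<le> r"
    using \<open>v \<noteq> \<infinity>\<close> by (cases v) auto
  have "P N \<noteq> 0"
    using nz by (simp add: P_def ennreal_prod_eq_0)
  moreover have "P N \<noteq> \<infinity>"
    using bound[of 0] r by (auto simp: top_unique)
  ultimately obtain p where p: "P N = ennreal p" "0 < p"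
    by (cases "P N") auto
  obtain j where "r / p < c ^ j"
    using real_arch_pow[OF \<open>1 < c\<close>] by blast
  moreover have "c ^ j * p \<le> r"
    using bound[of j] p r \<open>1 < c\<close> by (simp add: ennreal_mult[symmetric])
  ultimately show False
    using p by (simp add: divide_less_eq)
qed

lemma inj_select_from_infinite:
  fixes B :: "nat \<Rightarrow> nat set"
  assumes "\<And>n. infinite (B n)"
  obtains s where "inj s" and "\<And>n. s n \<in> B n"
proof -
  have "\<exists>s. \<forall>n. s n \<in> B n \<and> s n < s (Suc n)"
  proof (rule dependent_nat_choice)
    show "\<exists>x. x \<in> B 0"
      using assms[of 0] by (metis ex_in_conv finite.emptyI)
    show "\<exists>y. y \<in> B (Suc n) \<and> x < y" for x n
      using assms[of "Suc n"] by (meson infinite_nat_iff_unbounded)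
  qed
  then obtain s where "\<And>n. s n \<in> B n" "strict_mono s"
    by (auto simp: strict_mono_Suc_iff)
  then show thesis
    using strict_mono_imp_inj_on that by blast
qed

lemma rect_in_B_inf:
  assumes "\<And>i. C i \<in> sets borel"
  shows "rect C \<in> B_inf"
proof -
  have "{x. \<forall>i<m. x i \<in> C i} \<in> B_inf" for m
    unfolding B_inf_def cylinder_sets_def using assms by (intro sigma_sets.Basic) blast
  moreover have "rect C = (\<Inter>m. {x. \<forall>i<m. x i \<in> C i})"
    unfolding rect_def by auto
  ultimately show ?thesis
    unfolding B_inf_def by (simp add: sigma_sets_Inter)
qed

lemma vol_eq_if_has_vol: "has_vol C v \<Longrightarrow> vol C = v"
  unfolding has_vol_def vol_def by (rule limI)

lemma mu_star_le_suminf_vol: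
  assumes "\<And>n. finite_rect (\<C> n)" and "A \<subseteq> (\<Union>n. rect (\<C> n))"
  shows "mu_star A \<le> (\<Sum>n. vol (\<C> n))"
  unfolding mu_star_def by (rule Inf_lower) (use assms in auto)

lemma mu_star_finite_imp_cover:
  assumes "mu_star A < \<infinity>"
  obtains \<C> :: "nat \<Rightarrow> nat \<Rightarrow> real set"
  where "\<And>n. finite_rect (\<C> n)" and "A \<subseteq> (\<Union>n. rect (\<C> n))"
proof -
  let ?covers = "\<lambda>\<C> :: nat \<Rightarrow> nat \<Rightarrow> real set. (\<forall>n. finite_rect (\<C> n)) \<and> A \<subseteq> (\<Union>n. rect (\<C> n))"
  have "\<exists>\<C>. ?covers \<C>"
  proof (rule ccontr)
    assume "\<nexists>\<C>. ?covers \<C>"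
    then have no_cover: "{(\<Sum>n. vol (\<C> n)) | \<C>. ?covers \<C>} = {}"
      by (simp add: Setcompr_eq_image)
    then show False
      using assms unfolding mu_star_def no_cover by simp
  qed
  then show thesis
    using that by blast
qed

lemma mu_star_zero_if_Int_has_vol_zero:
  assumes "A \<subseteq> rect C" and "mu_star A < \<infinity>" and C: "\<And>i. C i \<in> sets borel"
    and Int_null: "\<And>D. finite_rect D \<Longrightarrow> has_vol (\<lambda>i. D i \<inter> C i) 0"
  shows "mu_star A = 0"
proof -
  obtain R :: "nat \<Rightarrow> nat \<Rightarrow> real set"
    where R: "\<And>n. finite_rect (R n)" and cover: "A \<subseteq> (\<Union>n. rect (R n))"
    using mu_star_finite_imp_cover assms(2) by blast
  define R' where "R' n i = R n i \<inter> C i" for n i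
  have null_vol: "has_vol (R' n) 0" for n
    unfolding R'_def by (rule Int_null[OF R])
  moreover have "R' n i \<in> sets borel" for n i
    using R[of n] C unfolding finite_rect_def R'_def by auto
  ultimately have "finite_rect (R' n)" for n
    unfolding finite_rect_def by (intro conjI allI exI[of _ 0]) auto
  moreover have "A \<subseteq> (\<Union>n. rect (R' n))"
  proof
    fix x assume "x \<in> A"
    then obtain n where "x \<in> rect (R n)" "x \<in> rect C"
      using cover assms(1) by blast
    then have "x \<in> rect (R' n)"
      by (simp add: rect_def R'_def)
    then show "x \<in> (\<Union>n. rect (R' n))"
      by blast
  qed
  ultimately have "mu_star A \<le> (\<Sum>n. vol (R' n))"
    by (rule mu_star_le_suminf_vol)
  then show ?thesis
    using vol_eq_if_has_vol[OF null_vol] by simp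
qed

lemma rect_not_subset_Union_rect:
  fixes C :: "nat \<Rightarrow> real set" and R :: "nat \<Rightarrow> nat \<Rightarrow> real set"
  assumes C: "\<And>i. C i \<in> sets borel" "\<And>i. C i \<notin> null_sets lborel"
    and R: "\<And>n i. R n i \<in> sets borel"
    and "inj s"
    and escape: "\<And>n. (\<exists>i. R n i \<inter> C i \<in> null_sets lborel) \<or>
      C (s n) - R n (s n) \<notin> null_sets lborel"
  shows "\<not> rect C \<subseteq> (\<Union>n. rect (R n))"
proof
  assume cover: "rect C \<subseteq> (\<Union>n. rect (R n))"
  define Null where "Null i = (\<Union>n \<in> {n. R n i \<inter> C i \<in> null_sets lborel}. R n i \<inter> C i)" for i
  define Escaped where
    "Escaped i = (\<Union>n \<in> {n. s n = i \<and> C i - R n i \<notin> null_sets lborel}. R n i)" for i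
  have Null: "Null i \<in> null_sets lborel" for i
    unfolding Null_def by (rule null_sets_UN') auto
  have "C i - Escaped i \<notin> null_sets lborel" for i
  proof (cases "\<exists>n. s n = i \<and> C i - R n i \<notin> null_sets lborel")
    case True
    then obtain n where n: "s n = i" "C i - R n i \<notin> null_sets lborel"
      by blast
    then have "{n. s n = i \<and> C i - R n i \<notin> null_sets lborel} = {n}"
      using \<open>inj s\<close> by (auto dest: injD)
    then show ?thesis
      using n by (simp add: Escaped_def)
  next
    case False
    then have "Escaped i = {}"
      by (auto simp: Escaped_def)
    then show ?thesis
      using C(2) by simp
  qed
  moreover have "C i - Escaped i \<in> sets lborel" for i
    unfolding Escaped_def using C(1) R by (intro sets.Diff sets.countable_UN') auto
  ultimately have "\<forall>i. \<exists>y. y \<in> C i - Escaped i - Null i"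
    using null_sets_subset[OF Null] by blast
  then obtain x where x: "\<And>i. x i \<in> C i - Escaped i - Null i"
    by (metis choice)
  then have "x \<in> rect C"
    by (simp add: rect_def)
  with cover obtain n where "x \<in> rect (R n)"
    by blast
  then have "x i \<in> R n i" for i
    by (simp add: rect_def)
  with x escape[of n] show False
    unfolding Null_def Escaped_def by blast
qed

definition alternating_side :: "nat \<Rightarrow> real set" where
  "alternating_side i = (if even i then {0..1/2} else {0..4})"

lemma alternating_side_borel [measurable]: "alternating_side i \<in> sets borel"
  by (simp add: alternating_side_def)

lemma emeasure_alternating_side: "emeasure lborel (alternating_side i) = ennreal (if even i then 1/2 else 4)"
  by (simp add: alternating_side_def)

lemma has_vol_Int_alternating_side_zero:
  assumes "finite_rect D"
  shows "has_vol (\<lambda>i. D i \<inter> alternating_side i) 0"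
proof -
  obtain v where lim: "(\<lambda>n. \<Prod>i<n. emeasure lborel (D i)) \<longlonglongrightarrow> v" and "v < \<infinity>"
    and D: "\<And>i. D i \<in> sets borel"
    using assms by (auto simp: finite_rect_def has_vol_def)
  have "emeasure lborel (D i \<inter> alternating_side i) \<le> ennreal (1/2)" if "even i" for i
    using emeasure_mono[of "D i \<inter> alternating_side i" "alternating_side i" lborel] that
    by (simp add: emeasure_alternating_side)
  then have "{i. even i} \<subseteq> {i. emeasure lborel (D i \<inter> alternating_side i) \<le> ennreal (1/2)}"
    by blast
  moreover have "infinite (range (\<lambda>k::nat. 2 * k))"
    by (rule range_inj_infinite) (simp add: inj_on_def)
  then have "infinite {i::nat. even i}"
    by (rule infinite_super[rotated]) auto
  ultimately have "infinite {i. emeasure lborel (D i \<inter> alternating_side i) \<le> ennreal (1/2)}"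
    using infinite_super by blast
  moreover have "emeasure lborel (D i \<inter> alternating_side i) \<le> emeasure lborel (D i)" for i
    using D by (intro emeasure_mono) auto
  ultimately show ?thesis
    unfolding has_vol_def
    by (intro ennreal_prod_tendsto_zero_if_infinitely_often_le[OF lim \<open>v < \<infinity>\<close>, of _ "1/2"]) auto
qed

lemma finite_rect_infinitely_often_misses_alternating_side:
  assumes "finite_rect D" and meets: "\<And>i. D i \<inter> alternating_side i \<notin> null_sets lborel"
  shows "infinite {i. alternating_side i - D i \<notin> null_sets lborel}"
proof
  assume "finite {i. alternating_side i - D i \<notin> null_sets lborel}"
  then obtain N where "\<forall>i\<in>{i. alternating_side i - D i \<notin> null_sets lborel}. i < N"
    by (auto simp: finite_nat_set_iff_bounded)
  then have N: "\<And>i. N \<le> i \<Longrightarrow> alternating_side i - D i \<in> null_sets lborel"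
    by (auto simp: not_less[symmetric])
  obtain v where lim: "(\<lambda>n. \<Prod>i<n. emeasure lborel (D i)) \<longlonglongrightarrow> v" and "v < \<infinity>"
    and D: "\<And>i. D i \<in> sets borel"
    using assms(1) by (auto simp: finite_rect_def has_vol_def)
  have "emeasure lborel (D i) \<noteq> 0" for i
    using meets[of i] D emeasure_mono[of "D i \<inter> alternating_side i" "D i" lborel]
    by (auto simp: null_sets_def)
  moreover have "ennreal 2 \<le> emeasure lborel (D i) * emeasure lborel (D (Suc i))" if "N \<le> i" for i
  proof -
    have side: "emeasure lborel (alternating_side j) \<le> emeasure lborel (D j)" if "N \<le> j" for j
    proof -
      have "emeasure lborel (alternating_side j) = emeasure lborel (alternating_side j - (alternating_side j - D j))"
        using N[OF that] by (intro emeasure_Diff_null_set[symmetric]) auto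
      also have "\<dots> \<le> emeasure lborel (D j)"
        using D by (intro emeasure_mono) auto
      finally show ?thesis .
    qed
    have "ennreal 2 = emeasure lborel (alternating_side i) * emeasure lborel (alternating_side (Suc i))"
      by (simp add: emeasure_alternating_side ennreal_mult[symmetric])
    also have "\<dots> \<le> emeasure lborel (D i) * emeasure lborel (D (Suc i))"
      using that by (intro mult_mono side) auto
    finally show ?thesis .
  qed
  ultimately have "v = \<infinity>"
    by (rule ennreal_prod_tendsto_top_if_pairs_ge[OF lim, of N "2::real"]) auto
  with \<open>v < \<infinity>\<close> show False
    by simp
qed

lemma rect_alternating_side_not_covered:
  fixes R :: "nat \<Rightarrow> nat \<Rightarrow> real set"
  assumes "\<And>n. finite_rect (R n)"
  shows "\<not> rect alternating_side \<subseteq> (\<Union>n. rect (R n))"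
proof -
  define B where "B n = (if \<exists>i. R n i \<inter> alternating_side i \<in> null_sets lborel then UNIV
    else {i. alternating_side i - R n i \<notin> null_sets lborel})" for n
  have B: "infinite (B n)" for n
  proof (cases "\<exists>i. R n i \<inter> alternating_side i \<in> null_sets lborel")
    case False
    then show ?thesis
      using finite_rect_infinitely_often_misses_alternating_side[OF assms] by (simp add: B_def)
  qed (simp add: B_def)
  obtain s where "inj s" and s: "\<And>n. s n \<in> B n"
    using inj_select_from_infinite[of B, OF B] by blast
  show ?thesis
  proof (rule rect_not_subset_Union_rect[OF alternating_side_borel _ _ \<open>inj s\<close>])
    show "alternating_side i \<notin> null_sets lborel" for i
      by (simp add: null_sets_def emeasure_alternating_side)
    show "R n i \<in> sets borel" for n i
      using assms by (simp add: finite_rect_def)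
    show "(\<exists>i. R n i \<inter> alternating_side i \<in> null_sets lborel) \<or>
      alternating_side (s n) - R n (s n) \<notin> null_sets lborel" for n
      using s[of n] by (auto simp: B_def split: if_splits)
  qed
qed

lemma mu_rect_alternating_side: "mu (rect alternating_side) = \<infinity>"
proof (rule ccontr)
  assume "mu (rect alternating_side) \<noteq> \<infinity>"
  then have "mu_star (rect alternating_side) < \<infinity>"
    by (simp add: mu_def less_top)
  then obtain R :: "nat \<Rightarrow> nat \<Rightarrow> real set"
    where "\<And>n. finite_rect (R n)" and "rect alternating_side \<subseteq> (\<Union>n. rect (R n))"
    using mu_star_finite_imp_cover by blast
  with rect_alternating_side_not_covered show False
    by blast
qed

theorem propositionA3:
  shows "\<not> semifinite B_inf mu"
proof
  assume "semifinite B_inf mu"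
  moreover have "rect alternating_side \<in> B_inf"
    by (rule rect_in_B_inf) (rule alternating_side_borel)
  ultimately obtain B where B: "B \<subseteq> rect alternating_side" "0 < mu B" "mu B < \<infinity>"
    using mu_rect_alternating_side unfolding semifinite_def by (auto dest: bspec)
  moreover have "mu B = 0"
    using B has_vol_Int_alternating_side_zero unfolding mu_def
    by (intro mu_star_zero_if_Int_has_vol_zero alternating_side_borel) auto
  ultimately show False
    by simp
qed

end
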